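(* Let $\mathcal{C}_2=\mathbb{C}\{e_1,e_2\}$ be the complex algebra with basis $1,e_1,e_2,e_{12}=e_1e_2$, where $e_1^2=e_2^2=-1$, $e_1e_2=-e_2e_1$. For $A=A_0+A_1e_1+A_2e_2+A_3e_{12}\in\mathcal{C}_2^{m\times n}$ with $A_j\in\mathbb{C}^{m\times n}$, define $$\Phi_2(A)=\begin{pmatrix}A_0+A_1i & -(A_2+A_3i)\\ A_2-A_3i & A_0-A_1i\end{pmatrix}\in\mathbb{C}^{2m\times2n},$$ and $A^{\#}=A_0^*-A_1^*e_1-A_2^*e_2-A_3^*e_{12}$ (with $^*$ the conjugate transpose). Let $A,B\in\mathcal{C}_2^{m\times n}$, $C\in\mathcal{C}_2^{n\times p}$, $\lambda\in\mathbb{C}$. Then: (a) $A=B$ iff $\Phi_2(A)=\Phi_2(B)$; (b) $\Phi_2(A+B)=\Phi_2(A)+\Phi_2(B)$; (c) $\Phi_2(AC)=\Phi_2(A)\Phi_2(C)$, $\Phi_2(\lambda A)=\lambda\Phi_2(A)$, $\Phi_2(I_m)=I_{2m}$; (d) $\Phi_2(A^{\#})=\Phi_2(A)^*$; (e) $A=\frac14\,[(1-ie_1)I_m,\ (e_2+ie_{12})I_m]\,\Phi_2(A)\,[(1-ie_1)I_n,\ (-e_2+ie_{12})I_n]^T$; (f) if $m=n$: $A$ is invertible iff $\Phi_2(A)$ is invertible, in which case $\Phi_2(A^{-1})=\Phi_2(A)^{-1}$; (g) if $m=n$: $p_A(A)=0$, where $p_A(\lambda)=\det[\lambda I_{2m}-\Phi_2(A)]$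 is the characteristic polynomial of $\Phi_2(A)$; (h) for square $A,B\in\mathcal{C}_2^{m\times m}$: there exists an invertible $X\in\mathcal{C}_2^{m\times m}$ with $AX=XB$ iff $\Phi_2(A)$ and $\Phi_2(B)$ are similar over $\mathbb{C}$.
   Context: $i$ is the imaginary unit of $\mathbb{C}$, commuting with all elements of $\mathcal{C}_2$. In (g), the complex polynomial $p_A$ is evaluated at the matrix $A$ over $\mathcal{C}_2$ in the usual way. *)

theory Defs
  imports "Jordan_Normal_Form.Matrix" "Jordan_Normal_Form.Char_Poly"
begin

text \<open>An element a0 + a1 e1 + a2 e2 + a3 e12 is stored by its four complex
coordinates, with e1^2 = e2^2 = -1, e1 e2 = - e2 e1 = e12.\<close>

datatype C2 = C2 (c0: complex) (c1: complex) (c2: complex) (c3: complex)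

instantiation C2 :: ring_1
begin

definition zero_C2 where "0 = C2 0 0 0 0"
definition one_C2 where "1 = C2 1 0 0 0"
definition plus_C2 where
  "a + b = C2 (c0 a + c0 b) (c1 a + c1 b) (c2 a + c2 b) (c3 a + c3 b)"
definition uminus_C2 where "- a = C2 (- c0 a) (- c1 a) (- c2 a) (- c3 a)"
definition minus_C2 where
  "a - b = C2 (c0 a - c0 b) (c1 a - c1 b) (c2 a - c2 b) (c3 a - c3 b)"
definition times_C2 where
  "a * b = C2
     (c0 a * c0 b - c1 a * c1 b - c2 a * c2 b - c3 a * c3 b)
     (c0 a * c1 b + c1 a * c0 b + c2 a * c3 b - c3 a * c2 b)
     (c0 a * c2 b + c2 a * c0 b - c1 a * c3 b + c3 a * c1 b)
     (c0 a * c3 b + c3 a * c0 b + c1 a * c2 b - c2 a * c1 b)"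

instance
  by standard (auto simp: zero_C2_def one_C2_def plus_C2_def uminus_C2_def
      minus_C2_def times_C2_def algebra_simps intro!: C2.expand)

end

definition cs :: "complex \<Rightarrow> C2" where "cs z = C2 z 0 0 0"
definition e1 :: C2 where "e1 = C2 0 1 0 0"
definition e2 :: C2 where "e2 = C2 0 0 1 0"
definition e12 :: C2 where "e12 = C2 0 0 0 1"

definition comp0 :: "C2 mat \<Rightarrow> complex mat" where "comp0 A = map_mat c0 A"
definition comp1 :: "C2 mat \<Rightarrow> complex mat" where "comp1 A = map_mat c1 A"
definition comp2 :: "C2 mat \<Rightarrow> complex mat" where "comp2 A = map_mat c2 A"
definition comp3 :: "C2 mat \<Rightarrow> complex mat" where "comp3 A = map_mat c3 A"

definition ctrans :: "complex mat \<Rightarrow> complex mat" where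
  "ctrans M = mat (dim_col M) (dim_row M) (\<lambda>(i,j). cnj (M $$ (j,i)))"

definition Phi2 :: "C2 mat \<Rightarrow> complex mat" where
  "Phi2 A = four_block_mat
     (comp0 A + \<i> \<cdot>\<^sub>m comp1 A)  (- (comp2 A + \<i> \<cdot>\<^sub>m comp3 A))
     (comp2 A - \<i> \<cdot>\<^sub>m comp3 A)  (comp0 A - \<i> \<cdot>\<^sub>m comp1 A)"

definition sharp :: "C2 mat \<Rightarrow> C2 mat" where
  "sharp A = mat (dim_col A) (dim_row A) (\<lambda>ij.
      cs (ctrans (comp0 A) $$ ij) - cs (ctrans (comp1 A) $$ ij) * e1
      - cs (ctrans (comp2 A) $$ ij) * e2 - cs (ctrans (comp3 A) $$ ij) * e12)"

definition row_block :: "'a mat \<Rightarrow> 'a mat \<Rightarrow> 'a mat" where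
  "row_block X Y = mat (dim_row X) (dim_col X + dim_col Y)
     (\<lambda>(i,j). if j < dim_col X then X $$ (i,j) else Y $$ (i, j - dim_col X))"

definition poly_eval_C2mat :: "complex poly \<Rightarrow> C2 mat \<Rightarrow> C2 mat" where
  "poly_eval_C2mat p A = mat (dim_row A) (dim_col A)
     (\<lambda>ij. \<Sum>k\<le>degree p. cs (coeff p k) * (A ^\<^sub>m k) $$ ij)"

end

theory Submission
  imports Defs
begin

text \<open>The map x0 + x1 e1 + x2 e2 + x3 e12 \<mapsto> [[x0 + i x1, -(x2 + i x3)], [x2 - i x3, x0 - i x1]] is
  an isomorphism of complex algebras from C2 onto the complex 2 \<times> 2 matrices, and it sends
  cnj x0 - cnj x1 e1 - cnj x2 e2 - cnj x3 e12 to the conjugate transpose.  Phi2 applies it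
  entrywise and regroups the resulting 2 \<times> 2 blocks into four m \<times> n blocks, so Phi2 is a bijection
  from m \<times> n matrices over C2 onto complex 2m \<times> 2n matrices that respects sums, products, complex
  scalars and identities, and (d) holds entrywise.  Inverses and similarity transfer in both
  directions along such a bijection, and (e) writes out its inverse.  For (g), Phi2 maps the entries
  of p_A(A) to entries of p_A(Phi2 A), which vanish by the Cayley-Hamilton theorem; over any
  commutative ring, the latter follows by comparing coefficients in (tI - M) adj(tI - M) = \<chi>(t) I
  and telescoping.\<close>

text \<open>C2_rep a b x is the entry in row a, column b of the matrix of x, where False indexes the
  first and True the second row or column.\<close>

definition C2_rep :: "bool \<Rightarrow> bool \<Rightarrow> C2 \<Rightarrow> complex" where
  "C2_rep a b x =
     (if a then (if b then c0 x - \<i> * c1 x else c2 x - \<i> * c3 x)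
      else (if b then - (c2 x + \<i> * c3 x) else c0 x + \<i> * c1 x))"

definition C2_of_rep :: "(bool \<Rightarrow> bool \<Rightarrow> complex) \<Rightarrow> C2" where
  "C2_of_rep f = C2
     ((f False False + f True True) / 2) ((f False False - f True True) / (2 * \<i>))
     ((f True False - f False True) / 2) (- (f False True + f True False) / (2 * \<i>))"

lemma C2_rep_add: "C2_rep a b (x + y) = C2_rep a b x + C2_rep a b y"
  by (simp add: C2_rep_def plus_C2_def algebra_simps)

lemma C2_rep_zero [simp]: "C2_rep a b 0 = 0"
  by (simp add: C2_rep_def zero_C2_def)

lemma C2_rep_one: "C2_rep a b 1 = (if a = b then 1 else 0)"
  by (simp add: C2_rep_def one_C2_def)

lemma C2_rep_sum: "C2_rep a b (sum f S) = (\<Sum>s\<in>S. C2_rep a b (f s))"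
  by (induct S rule: infinite_finite_induct) (auto simp: C2_rep_add)

lemma C2_rep_mult: "C2_rep a b (x * y) = (\<Sum>c\<in>UNIV. C2_rep a c x * C2_rep c b y)"
  by (cases a; cases b) (simp_all add: UNIV_bool C2_rep_def times_C2_def algebra_simps)

lemma C2_rep_cs_mult: "C2_rep a b (cs z * x) = z * C2_rep a b x"
  by (simp add: C2_rep_def cs_def times_C2_def algebra_simps)

lemma C2_rep_of_rep: "C2_rep a b (C2_of_rep f) = f a b"
  by (cases a; cases b) (simp_all add: C2_rep_def C2_of_rep_def field_simps)

lemma C2_of_rep_rep: "C2_of_rep (\<lambda>a b. C2_rep a b x) = x"
  by (cases x) (simp add: C2_rep_def C2_of_rep_def field_simps)

lemma C2_rep_inject: "(\<forall>a b. C2_rep a b x = C2_rep a b y) \<longleftrightarrow> x = y"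
proof
  assume "\<forall>a b. C2_rep a b x = C2_rep a b y"
  then have "C2_of_rep (\<lambda>a b. C2_rep a b x) = C2_of_rep (\<lambda>a b. C2_rep a b y)" by simp
  then show "x = y" by (simp only: C2_of_rep_rep)
qed simp

lemma C2_rep_sharp:
  "C2_rep a b (cs (cnj (c0 x)) - cs (cnj (c1 x)) * e1 - cs (cnj (c2 x)) * e2 - cs (cnj (c3 x)) * e12)
   = cnj (C2_rep b a x)"
  by (cases a; cases b) (simp_all add: C2_rep_def cs_def times_C2_def minus_C2_def e1_def e2_def e12_def)

text \<open>With u = (1 - i e1, e2 + i e12) and v = (1 - i e1, -e2 + i e12), the products u_a v_b / 4
  are the matrix units of C2.\<close>

lemma C2_eq_rep_expansion:
  "x = cs (1/4) *
     (((1 - cs \<i> * e1) * cs (C2_rep False False x) + (e2 + cs \<i> * e12) * cs (C2_rep True False x))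
        * (1 - cs \<i> * e1)
    + ((1 - cs \<i> * e1) * cs (C2_rep False True x) + (e2 + cs \<i> * e12) * cs (C2_rep True True x))
        * (- e2 + cs \<i> * e12))"
  by (cases x) (simp add: C2_rep_def cs_def times_C2_def minus_C2_def plus_C2_def uminus_C2_def
      one_C2_def e1_def e2_def e12_def algebra_simps)

definition block_idx :: "nat \<Rightarrow> bool \<Rightarrow> nat \<Rightarrow> nat" where
  "block_idx n b i = (if b then i + n else i)"

lemma block_idx_less: "i < n \<Longrightarrow> block_idx n b i < 2 * n"
  by (simp add: block_idx_def)

lemma block_idx_eq_iff: "i < n \<Longrightarrow> j < n \<Longrightarrow> block_idx n a i = block_idx n b j \<longleftrightarrow> a = b \<and> i = j"
  by (auto simp: block_idx_def)

lemma block_idx_cases: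
  assumes "i < 2 * n"
  obtains b i' where "i' < n" "i = block_idx n b i'"
proof (cases "n \<le> i")
  case True
  with assms that[of "i - n" True] show ?thesis by (simp add: block_idx_def)
next
  case False
  with that[of i False] show ?thesis by (simp add: block_idx_def)
qed

lemma sum_block_idx:
  "(\<Sum>k\<in>{0..<2 * n}. f k) = (\<Sum>b\<in>UNIV. \<Sum>k\<in>{0..<n}. f (block_idx n b k))"
proof -
  have "(\<Sum>k\<in>{0..<2 * n}. f k) = (\<Sum>k\<in>{0..<n}. f k) + (\<Sum>k\<in>{0 + n..<n + n}. f k)"
    by (simp add: mult_2 sum.atLeastLessThan_concat)
  also have "(\<Sum>k\<in>{0 + n..<n + n}. f k) = (\<Sum>k\<in>{0..<n}. f (k + n))"
    by (rule sum.shift_bounds_nat_ivl)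
  finally show ?thesis by (simp add: UNIV_bool block_idx_def)
qed

lemma eq_block_matI:
  assumes "M \<in> carrier_mat (2 * m) (2 * n)" "N \<in> carrier_mat (2 * m) (2 * n)"
    and "\<And>a b i j. i < m \<Longrightarrow> j < n \<Longrightarrow>
      M $$ (block_idx m a i, block_idx n b j) = N $$ (block_idx m a i, block_idx n b j)"
  shows "M = N"
proof (rule eq_matI)
  fix i j assume "i < dim_row N" "j < dim_col N"
  with assms(2) have "i < 2 * m" "j < 2 * n" by auto
  then show "M $$ (i, j) = N $$ (i, j)"
    by (elim block_idx_cases) (simp add: assms(3))
qed (use assms in auto)

lemma dim_comp [simp]:
  "dim_row (comp0 A) = dim_row A" "dim_col (comp0 A) = dim_col A"
  "dim_row (comp1 A) = dim_row A" "dim_col (comp1 A) = dim_col A"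
  "dim_row (comp2 A) = dim_row A" "dim_col (comp2 A) = dim_col A"
  "dim_row (comp3 A) = dim_row A" "dim_col (comp3 A) = dim_col A"
  by (simp_all add: comp0_def comp1_def comp2_def comp3_def)

lemma index_comp [simp]:
  assumes "i < dim_row A" "j < dim_col A"
  shows "comp0 A $$ (i, j) = c0 (A $$ (i, j))" "comp1 A $$ (i, j) = c1 (A $$ (i, j))"
    "comp2 A $$ (i, j) = c2 (A $$ (i, j))" "comp3 A $$ (i, j) = c3 (A $$ (i, j))"
  using assms by (simp_all add: comp0_def comp1_def comp2_def comp3_def)

lemma dim_Phi2 [simp]:
  "dim_row (Phi2 A) = 2 * dim_row A" "dim_col (Phi2 A) = 2 * dim_col A"
  unfolding Phi2_def by simp_all

lemma Phi2_carrier: "A \<in> carrier_mat m n \<Longrightarrow> Phi2 A \<in> carrier_mat (2 * m) (2 * n)"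
  by (intro carrier_matI) auto

lemma index_Phi2:
  assumes "A \<in> carrier_mat m n" "i < m" "j < n"
  shows "Phi2 A $$ (block_idx m a i, block_idx n b j) = C2_rep a b (A $$ (i, j))"
  using assms by (cases a; cases b) (simp_all add: Phi2_def block_idx_def C2_rep_def)

lemma Phi2_eq_iff:
  assumes "A \<in> carrier_mat m n" "B \<in> carrier_mat m n"
  shows "Phi2 A = Phi2 B \<longleftrightarrow> A = B"
proof
  assume eq: "Phi2 A = Phi2 B"
  show "A = B"
  proof (rule eq_matI)
    fix i j assume "i < dim_row B" "j < dim_col B"
    with assms have "i < m" "j < n" by auto
    with eq show "A $$ (i, j) = B $$ (i, j)"
      by (metis C2_rep_inject index_Phi2 assms)
  qed (use assms in auto)
qed simp

lemma Phi2_surj: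
  assumes M: "M \<in> carrier_mat (2 * m) (2 * n)"
  obtains A where "A \<in> carrier_mat m n" "Phi2 A = M"
proof
  define A where "A = mat m n (\<lambda>(i, j). C2_of_rep (\<lambda>a b. M $$ (block_idx m a i, block_idx n b j)))"
  show A: "A \<in> carrier_mat m n" by (simp add: A_def)
  show "Phi2 A = M"
    by (rule eq_block_matI[OF Phi2_carrier[OF A] M]) (simp add: index_Phi2[OF A], simp add: A_def C2_rep_of_rep)
qed

lemma Phi2_add:
  assumes "A \<in> carrier_mat m n" "B \<in> carrier_mat m n"
  shows "Phi2 (A + B) = Phi2 A + Phi2 B"
  using assms
  by (intro eq_block_matI[of _ m n]) (auto simp: Phi2_carrier index_Phi2 block_idx_less C2_rep_add)

lemma Phi2_smult:
  assumes "A \<in> carrier_mat m n"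
  shows "Phi2 (cs z \<cdot>\<^sub>m A) = z \<cdot>\<^sub>m Phi2 A"
  using assms
  by (intro eq_block_matI[of _ m n]) (auto simp: Phi2_carrier index_Phi2 block_idx_less C2_rep_cs_mult)

lemma Phi2_one: "Phi2 (1\<^sub>m n) = 1\<^sub>m (2 * n)"
  by (intro eq_block_matI[of _ n n])
    (auto simp: Phi2_carrier index_Phi2 block_idx_less block_idx_eq_iff C2_rep_one)

lemma Phi2_mult:
  assumes A: "A \<in> carrier_mat m n" and C: "C \<in> carrier_mat n p"
  shows "Phi2 (A * C) = Phi2 A * Phi2 C"
proof (rule eq_block_matI[of _ m p])
  fix a b i j assume ij: "i < m" "j < p"
  have "Phi2 (A * C) $$ (block_idx m a i, block_idx p b j)
      = (\<Sum>k\<in>{0..<n}. \<Sum>c\<in>UNIV. C2_rep a c (A $$ (i, k)) * C2_rep c b (C $$ (k, j)))"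
    using A C ij by (simp add: index_Phi2 scalar_prod_def C2_rep_sum C2_rep_mult)
  also have "\<dots> = (\<Sum>c\<in>UNIV. \<Sum>k\<in>{0..<n}.
      Phi2 A $$ (block_idx m a i, block_idx n c k) * Phi2 C $$ (block_idx n c k, block_idx p b j))"
    using A C ij by (subst sum.swap) (simp add: index_Phi2)
  also have "\<dots> = (\<Sum>k\<in>{0..<2 * n}. Phi2 A $$ (block_idx m a i, k) * Phi2 C $$ (k, block_idx p b j))"
    by (simp only: sum_block_idx)
  also have "\<dots> = (Phi2 A * Phi2 C) $$ (block_idx m a i, block_idx p b j)"
    using A C ij by (simp add: block_idx_less scalar_prod_def)
  finally show "Phi2 (A * C) $$ (block_idx m a i, block_idx p b j)
      = (Phi2 A * Phi2 C) $$ (block_idx m a i, block_idx p b j)" .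
qed (use A C in \<open>auto intro: Phi2_carrier\<close>)

lemma Phi2_pow:
  assumes A: "A \<in> carrier_mat n n"
  shows "Phi2 (A ^\<^sub>m k) = Phi2 A ^\<^sub>m k"
proof (induction k)
  case 0
  show ?case by (simp add: Phi2_one)
next
  case (Suc k)
  then show ?case using A by (simp add: Phi2_mult[OF pow_carrier_mat[OF A] A])
qed

lemma index_ctrans [simp]:
  "i < dim_col M \<Longrightarrow> j < dim_row M \<Longrightarrow> ctrans M $$ (i, j) = cnj (M $$ (j, i))"
  "dim_row (ctrans M) = dim_col M" "dim_col (ctrans M) = dim_row M"
  by (simp_all add: ctrans_def)

lemma index_sharp:
  assumes "A \<in> carrier_mat m n" "i < n" "j < m"
  shows "sharp A $$ (i, j) = cs (cnj (c0 (A $$ (j, i)))) - cs (cnj (c1 (A $$ (j, i)))) * e1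
    - cs (cnj (c2 (A $$ (j, i)))) * e2 - cs (cnj (c3 (A $$ (j, i)))) * e12"
  using assms by (simp add: sharp_def comp0_def comp1_def comp2_def comp3_def)

lemma Phi2_sharp:
  assumes A: "A \<in> carrier_mat m n"
  shows "Phi2 (sharp A) = ctrans (Phi2 A)"
proof -
  have S: "sharp A \<in> carrier_mat n m" using A by (simp add: sharp_def)
  show ?thesis
  proof (rule eq_block_matI[OF Phi2_carrier[OF S]])
    show "ctrans (Phi2 A) \<in> carrier_mat (2 * n) (2 * m)" using A by auto
    fix a b i j assume ij: "i < n" "j < m"
    have "Phi2 (sharp A) $$ (block_idx n a i, block_idx m b j) = C2_rep a b (sharp A $$ (i, j))"
      using index_Phi2[OF S ij] .
    also have "\<dots> = cnj (Phi2 A $$ (block_idx m b j, block_idx n a i))"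
      using ij by (simp add: index_sharp[OF A] C2_rep_sharp index_Phi2[OF A])
    also have "\<dots> = ctrans (Phi2 A) $$ (block_idx n a i, block_idx m b j)"
      using A ij by (simp add: block_idx_less)
    finally show "Phi2 (sharp A) $$ (block_idx n a i, block_idx m b j)
      = ctrans (Phi2 A) $$ (block_idx n a i, block_idx m b j)" .
  qed
qed

lemma dim_row_block [simp]:
  "dim_row (row_block X Y) = dim_row X" "dim_col (row_block X Y) = dim_col X + dim_col Y"
  by (simp_all add: row_block_def)

lemma row_block_carrier:
  "X \<in> carrier_mat m n \<Longrightarrow> Y \<in> carrier_mat m n \<Longrightarrow> row_block X Y \<in> carrier_mat m (2 * n)"
  by (intro carrier_matI) auto

lemma index_row_block_smult_one:
  fixes u w :: "'a::semiring_1"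
  assumes "i < m" "k < m"
  shows "row_block (u \<cdot>\<^sub>m 1\<^sub>m m) (w \<cdot>\<^sub>m 1\<^sub>m m) $$ (i, block_idx m b k)
    = (if i = k then if b then w else u else 0)"
  using assms by (simp add: row_block_def block_idx_def)

lemma row_block_smult_one_mult:
  fixes P :: "'a::ring_1 mat"
  assumes P: "P \<in> carrier_mat (2 * m) q" and "i < m" "l < q"
  shows "(row_block (u \<cdot>\<^sub>m 1\<^sub>m m) (w \<cdot>\<^sub>m 1\<^sub>m m) * P) $$ (i, l) = u * P $$ (i, l) + w * P $$ (i + m, l)"
proof -
  have "(row_block (u \<cdot>\<^sub>m 1\<^sub>m m) (w \<cdot>\<^sub>m 1\<^sub>m m) * P) $$ (i, l)
      = (\<Sum>b\<in>UNIV. \<Sum>k\<in>{0..<m}. row_block (u \<cdot>\<^sub>m 1\<^sub>m m) (w \<cdot>\<^sub>m 1\<^sub>m m) $$ (i, block_idx m b k) * P $$ (block_idx m b k, l))"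
    using assms by (simp add: scalar_prod_def sum_block_idx)
  also have "\<dots> = (\<Sum>b\<in>UNIV. \<Sum>k\<in>{0..<m}. if i = k then (if b then w else u) * P $$ (block_idx m b k, l) else 0)"
    using assms by (intro sum.cong refl) (simp add: index_row_block_smult_one)
  also have "\<dots> = u * P $$ (i, l) + w * P $$ (i + m, l)"
    using assms by (simp add: UNIV_bool block_idx_def sum.delta')
  finally show ?thesis .
qed

lemma mult_transpose_row_block_smult_one:
  fixes Q :: "'a::ring_1 mat"
  assumes Q: "Q \<in> carrier_mat q (2 * n)" and "l < q" "j < n"
  shows "(Q * transpose_mat (row_block (u \<cdot>\<^sub>m 1\<^sub>m n) (w \<cdot>\<^sub>m 1\<^sub>m n))) $$ (l, j)
    = Q $$ (l, j) * u + Q $$ (l, j + n) * w"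
proof -
  have "(Q * transpose_mat (row_block (u \<cdot>\<^sub>m 1\<^sub>m n) (w \<cdot>\<^sub>m 1\<^sub>m n))) $$ (l, j)
      = (\<Sum>k\<in>{0..<2 * n}. Q $$ (l, k) * row_block (u \<cdot>\<^sub>m 1\<^sub>m n) (w \<cdot>\<^sub>m 1\<^sub>m n) $$ (j, k))"
    using assms by (simp add: scalar_prod_def mult_2)
  also have "\<dots> = (\<Sum>b\<in>UNIV. \<Sum>k\<in>{0..<n}. if j = k then Q $$ (l, block_idx n b k) * (if b then w else u) else 0)"
    unfolding sum_block_idx using assms by (intro sum.cong refl) (simp add: index_row_block_smult_one)
  also have "\<dots> = Q $$ (l, j) * u + Q $$ (l, j + n) * w"
    using assms by (simp add: UNIV_bool block_idx_def sum.delta')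
  finally show ?thesis .
qed

lemma Phi2_reconstruct:
  assumes A: "A \<in> carrier_mat m n"
  shows "A = cs (1/4) \<cdot>\<^sub>m
          (row_block ((1 - cs \<i> * e1) \<cdot>\<^sub>m 1\<^sub>m m) ((e2 + cs \<i> * e12) \<cdot>\<^sub>m 1\<^sub>m m)
           * map_mat cs (Phi2 A)
           * transpose_mat
               (row_block ((1 - cs \<i> * e1) \<cdot>\<^sub>m 1\<^sub>m n) ((- e2 + cs \<i> * e12) \<cdot>\<^sub>m 1\<^sub>m n)))"
    (is "A = cs (1/4) \<cdot>\<^sub>m (?U * ?P * ?V)")
proof (rule eq_matI)
  fix i j assume "i < dim_row (cs (1/4) \<cdot>\<^sub>m (?U * ?P * ?V))" "j < dim_col (cs (1/4) \<cdot>\<^sub>m (?U * ?P * ?V))"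
  then have ij: "i < m" "j < n" by simp_all
  have P: "?P \<in> carrier_mat (2 * m) (2 * n)"
    using Phi2_carrier[OF A] by simp
  have UP: "?U * ?P \<in> carrier_mat m (2 * n)"
    using P by (intro mult_carrier_mat[OF row_block_carrier]) auto
  have P_entry: "?P $$ (block_idx m a i, block_idx n b j) = cs (C2_rep a b (A $$ (i, j)))" for a b
    using A ij by (simp add: block_idx_less index_Phi2)
  have UP_entry: "(?U * ?P) $$ (i, block_idx n b j)
      = (1 - cs \<i> * e1) * cs (C2_rep False b (A $$ (i, j))) + (e2 + cs \<i> * e12) * cs (C2_rep True b (A $$ (i, j)))" for b
    using row_block_smult_one_mult[OF P ij(1) block_idx_less[OF ij(2)]] P_entry[of False b] P_entry[of True b]
    by (simp add: block_idx_def[of m])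
  have "(?U * ?P * ?V) $$ (i, j) = (?U * ?P) $$ (i, block_idx n False j) * (1 - cs \<i> * e1)
      + (?U * ?P) $$ (i, block_idx n True j) * (- e2 + cs \<i> * e12)"
    unfolding block_idx_def if_False if_True by (rule mult_transpose_row_block_smult_one[OF UP ij])
  also have "\<dots> = ((1 - cs \<i> * e1) * cs (C2_rep False False (A $$ (i, j)))
      + (e2 + cs \<i> * e12) * cs (C2_rep True False (A $$ (i, j)))) * (1 - cs \<i> * e1)
    + ((1 - cs \<i> * e1) * cs (C2_rep False True (A $$ (i, j)))
      + (e2 + cs \<i> * e12) * cs (C2_rep True True (A $$ (i, j)))) * (- e2 + cs \<i> * e12)"
    unfolding UP_entry ..
  finally have UPV: "(?U * ?P * ?V) $$ (i, j) = \<dots>" .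
  have "(cs (1/4) \<cdot>\<^sub>m (?U * ?P * ?V)) $$ (i, j) = cs (1/4) * (?U * ?P * ?V) $$ (i, j)"
    using ij by simp
  also have "\<dots> = A $$ (i, j)"
    unfolding UPV by (rule C2_eq_rep_expansion[symmetric])
  finally show "A $$ (i, j) = (cs (1/4) \<cdot>\<^sub>m (?U * ?P * ?V)) $$ (i, j)"
    by (rule sym)
qed (use A in simp_all)

lemma invertible_mat_iff_inverse:
  fixes A :: "'a::semiring_1 mat"
  assumes A: "A \<in> carrier_mat n n"
  shows "invertible_mat A \<longleftrightarrow> (\<exists>B \<in> carrier_mat n n. A * B = 1\<^sub>m n \<and> B * A = 1\<^sub>m n)"
proof
  assume "invertible_mat A"
  then obtain B where AB: "A * B = 1\<^sub>m n" and BA: "B * A = 1\<^sub>m (dim_row B)"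
    using A unfolding invertible_mat_def inverts_mat_def by auto
  moreover have "dim_col B = n"
    using arg_cong[OF AB, of dim_col] by simp
  moreover have "dim_row B = n"
    using arg_cong[OF BA, of dim_col] A by simp
  ultimately show "\<exists>B \<in> carrier_mat n n. A * B = 1\<^sub>m n \<and> B * A = 1\<^sub>m n"
    by (auto intro!: carrier_matI)
next
  assume "\<exists>B \<in> carrier_mat n n. A * B = 1\<^sub>m n \<and> B * A = 1\<^sub>m n"
  then obtain B where "B \<in> carrier_mat n n" "A * B = 1\<^sub>m n" "B * A = 1\<^sub>m n" by blast
  with A show "invertible_mat A"
    unfolding invertible_mat_def inverts_mat_def by auto
qed

lemma similar_mat_iff_intertwining:
  fixes A :: "'a::semiring_1 mat"
  assumes A: "A \<in> carrier_mat n n" and B: "B \<in> carrier_mat n n"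
  shows "similar_mat A B \<longleftrightarrow> (\<exists>X \<in> carrier_mat n n. invertible_mat X \<and> A * X = X * B)"
proof
  assume "similar_mat A B"
  then obtain X Y where "similar_mat_wit A B X Y"
    unfolding similar_mat_def by blast
  note wit = similar_mat_witD2[OF A this]
  have X: "X \<in> carrier_mat n n" and Y: "Y \<in> carrier_mat n n"
    and XY: "X * Y = 1\<^sub>m n" "Y * X = 1\<^sub>m n" and AXBY: "A = X * B * Y"
    using wit by blast+
  have "A * X = X * B * (Y * X)"
    using X Y B by (simp add: AXBY assoc_mult_mat[of _ n n _ n _ n])
  then have "A * X = X * B"
    using X B XY by simp
  moreover have "invertible_mat X"
    using X Y XY by (auto simp: invertible_mat_iff_inverse)
  ultimately show "\<exists>X \<in> carrier_mat n n. invertible_mat X \<and> A * X = X * B"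
    using X by blast
next
  assume "\<exists>X \<in> carrier_mat n n. invertible_mat X \<and> A * X = X * B"
  then obtain X Y where X: "X \<in> carrier_mat n n" and Y: "Y \<in> carrier_mat n n"
    and XY: "X * Y = 1\<^sub>m n" "Y * X = 1\<^sub>m n" and AX: "A * X = X * B"
    by (auto simp: invertible_mat_iff_inverse)
  have "A = A * X * Y"
    using A X Y XY by (simp add: assoc_mult_mat[of _ n n _ n _ n])
  then have "A = X * B * Y"
    by (simp add: AX)
  with A B X Y XY show "similar_mat A B"
    by (intro similar_matI[of A B X Y n]) auto
qed

lemma bex_carrier_mat_Phi2:
  "(\<exists>N \<in> carrier_mat (2 * m) (2 * n). P N) \<longleftrightarrow> (\<exists>A \<in> carrier_mat m n. P (Phi2 A))"
proof
  assume "\<exists>N \<in> carrier_mat (2 * m) (2 * n). P N"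
  then obtain N where N: "N \<in> carrier_mat (2 * m) (2 * n)" "P N" by blast
  then obtain A where "A \<in> carrier_mat m n" "Phi2 A = N" by (elim Phi2_surj)
  with N show "\<exists>A \<in> carrier_mat m n. P (Phi2 A)" by blast
qed (use Phi2_carrier in blast)

lemma Phi2_mult_eq_one_iff:
  assumes "A \<in> carrier_mat m n" "B \<in> carrier_mat n m"
  shows "Phi2 A * Phi2 B = 1\<^sub>m (2 * m) \<longleftrightarrow> A * B = 1\<^sub>m m"
  using assms by (simp add: Phi2_mult[symmetric] Phi2_one[symmetric] Phi2_eq_iff[of _ m m])

lemma invertible_mat_Phi2_iff:
  assumes A: "A \<in> carrier_mat m m"
  shows "invertible_mat (Phi2 A) \<longleftrightarrow> invertible_mat A"
proof -
  have "invertible_mat (Phi2 A)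
      \<longleftrightarrow> (\<exists>B \<in> carrier_mat m m. Phi2 A * Phi2 B = 1\<^sub>m (2 * m) \<and> Phi2 B * Phi2 A = 1\<^sub>m (2 * m))"
    by (simp only: invertible_mat_iff_inverse[OF Phi2_carrier[OF A]] bex_carrier_mat_Phi2)
  also have "\<dots> \<longleftrightarrow> invertible_mat A"
    using A by (auto simp: invertible_mat_iff_inverse Phi2_mult_eq_one_iff)
  finally show ?thesis .
qed

lemma similar_mat_iff_ex_carrier:
  assumes "A \<in> carrier_mat n n"
  shows "similar_mat A B \<longleftrightarrow> (\<exists>P \<in> carrier_mat n n. \<exists>Q \<in> carrier_mat n n. similar_mat_wit A B P Q)"
  using similar_mat_witD2(6,7)[OF assms] unfolding similar_mat_def by blast

lemma similar_mat_wit_iff: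
  assumes "A \<in> carrier_mat n n" "B \<in> carrier_mat n n" "P \<in> carrier_mat n n" "Q \<in> carrier_mat n n"
  shows "similar_mat_wit A B P Q \<longleftrightarrow> P * Q = 1\<^sub>m n \<and> Q * P = 1\<^sub>m n \<and> A = P * B * Q"
  using similar_mat_witD2[OF assms(1)] similar_mat_witI[of P Q n A B] assms by blast

lemma similar_mat_wit_Phi2_iff:
  assumes A: "A \<in> carrier_mat m m" and B: "B \<in> carrier_mat m m"
    and P: "P \<in> carrier_mat m m" and Q: "Q \<in> carrier_mat m m"
  shows "similar_mat_wit (Phi2 A) (Phi2 B) (Phi2 P) (Phi2 Q) \<longleftrightarrow> similar_mat_wit A B P Q"
proof -
  have "Phi2 P * Phi2 B * Phi2 Q = Phi2 (P * B * Q)"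
    using Phi2_mult[OF mult_carrier_mat[OF P B] Q] Phi2_mult[OF P B] by simp
  then have eq: "Phi2 A = Phi2 P * Phi2 B * Phi2 Q \<longleftrightarrow> A = P * B * Q"
    using Phi2_eq_iff[OF A mult_carrier_mat[OF mult_carrier_mat[OF P B] Q]] by simp
  show ?thesis
    by (simp only: similar_mat_wit_iff[OF Phi2_carrier[OF A] Phi2_carrier[OF B] Phi2_carrier[OF P] Phi2_carrier[OF Q]]
        similar_mat_wit_iff[OF A B P Q] Phi2_mult_eq_one_iff[OF P Q] Phi2_mult_eq_one_iff[OF Q P] eq)
qed

lemma similar_mat_Phi2_iff:
  assumes A: "A \<in> carrier_mat m m" and B: "B \<in> carrier_mat m m"
  shows "similar_mat (Phi2 A) (Phi2 B) \<longleftrightarrow> similar_mat A B"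
proof -
  have "similar_mat (Phi2 A) (Phi2 B) \<longleftrightarrow> (\<exists>P \<in> carrier_mat m m. \<exists>Q \<in> carrier_mat m m.
      similar_mat_wit (Phi2 A) (Phi2 B) (Phi2 P) (Phi2 Q))"
    by (simp only: similar_mat_iff_ex_carrier[OF Phi2_carrier[OF A]] bex_carrier_mat_Phi2)
  also have "\<dots> \<longleftrightarrow> similar_mat A B"
    using A B by (simp add: similar_mat_wit_Phi2_iff similar_mat_iff_ex_carrier cong: bex_cong)
  finally show ?thesis .
qed

text \<open>Coefficient t of the (a, b) entry of (tI - M) adj(tI - M) = \<chi>(t) I.\<close>

lemma adj_char_poly_matrix_coeff:
  fixes M :: "'a::comm_ring_1 mat"
  defines "Ad \<equiv> adj_mat (char_poly_matrix M)"
  assumes M: "M \<in> carrier_mat k k" and ab: "a < k" "b < k"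
  shows "coeff (char_poly M) t * (if a = b then 1 else 0)
    = coeff (pCons 0 (Ad $$ (a, b))) t - (\<Sum>l\<in>{0..<k}. M $$ (a, l) * coeff (Ad $$ (l, b)) t)"
proof -
  have X: "char_poly_matrix M \<in> carrier_mat k k" using M by simp
  have Ad: "Ad \<in> carrier_mat k k" using adj_mat(1)[OF X] by (simp add: Ad_def)
  have "(char_poly_matrix M * Ad) $$ (a, b) = char_poly M * (if a = b then 1 else 0)"
    using adj_mat(2)[OF X] ab by (simp add: Ad_def char_poly_def)
  moreover have "(char_poly_matrix M * Ad) $$ (a, b)
      = (\<Sum>l\<in>{0..<k}. (if a = l then pCons 0 (Ad $$ (l, b)) else 0) - Polynomial.smult (M $$ (a, l)) (Ad $$ (l, b)))"
    using M Ad ab by (auto simp: scalar_prod_def char_poly_matrix_def distrib_right intro!: sum.cong)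
  moreover have "\<dots> = pCons 0 (Ad $$ (a, b)) - (\<Sum>l\<in>{0..<k}. Polynomial.smult (M $$ (a, l)) (Ad $$ (l, b)))"
    using ab by (simp add: sum_subtractf sum.delta')
  ultimately have "char_poly M * (if a = b then 1 else 0)
      = pCons 0 (Ad $$ (a, b)) - (\<Sum>l\<in>{0..<k}. Polynomial.smult (M $$ (a, l)) (Ad $$ (l, b)))"
    by simp
  from arg_cong[OF this, of "\<lambda>p. coeff p t"] show ?thesis
    by (cases "a = b") (simp_all add: coeff_sum)
qed

lemma char_poly_coeff_pow_entry_telescope:
  fixes M :: "'a::comm_ring_1 mat"
  defines "Ad \<equiv> adj_mat (char_poly_matrix M)"
  assumes M: "M \<in> carrier_mat k k" and ij: "i < k" "j < k"
  shows "coeff (char_poly M) t * (M ^\<^sub>m t) $$ (i, j)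
    = (\<Sum>l\<in>{0..<k}. (M ^\<^sub>m t) $$ (i, l) * coeff (pCons 0 (Ad $$ (l, j))) t)
    - (\<Sum>l\<in>{0..<k}. (M ^\<^sub>m Suc t) $$ (i, l) * coeff (pCons 0 (Ad $$ (l, j))) (Suc t))"
proof -
  have Mt: "M ^\<^sub>m t \<in> carrier_mat k k" using M by simp
  have "coeff (char_poly M) t * (M ^\<^sub>m t) $$ (i, j)
      = (\<Sum>l\<in>{0..<k}. (M ^\<^sub>m t) $$ (i, l) * (coeff (char_poly M) t * (if l = j then 1 else 0)))"
    using ij by (simp add: sum.delta' mult.commute if_distrib[of "\<lambda>x. _ * x"] cong: if_cong)
  also have "\<dots> = (\<Sum>l\<in>{0..<k}. (M ^\<^sub>m t) $$ (i, l) * coeff (pCons 0 (Ad $$ (l, j))) t)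
      - (\<Sum>l\<in>{0..<k}. \<Sum>s\<in>{0..<k}. (M ^\<^sub>m t) $$ (i, l) * M $$ (l, s) * coeff (Ad $$ (s, j)) t)"
    using M ij by (simp add: adj_char_poly_matrix_coeff Ad_def right_diff_distrib sum_subtractf
        sum_distrib_left mult.assoc)
  also have "(\<Sum>l\<in>{0..<k}. \<Sum>s\<in>{0..<k}. (M ^\<^sub>m t) $$ (i, l) * M $$ (l, s) * coeff (Ad $$ (s, j)) t)
      = (\<Sum>s\<in>{0..<k}. (M ^\<^sub>m Suc t) $$ (i, s) * coeff (pCons 0 (Ad $$ (s, j))) (Suc t))"
    using Mt M ij by (subst sum.swap) (simp add: scalar_prod_def sum_distrib_right)
  finally show ?thesis .
qed

theorem cayley_hamilton_entry:
  fixes M :: "'a::comm_ring_1 mat"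
  assumes M: "M \<in> carrier_mat k k" and ij: "i < k" "j < k"
  shows "(\<Sum>t\<le>degree (char_poly M). coeff (char_poly M) t * (M ^\<^sub>m t) $$ (i, j)) = 0"
proof -
  define Ad where "Ad = adj_mat (char_poly_matrix M)"
  \<comment> \<open>g t is the (i, j) entry of M^t B_(t-1), where B_s is the coefficient of t^s in adj(tI - M).\<close>
  define g where "g t = (\<Sum>l\<in>{0..<k}. (M ^\<^sub>m t) $$ (i, l) * coeff (pCons 0 (Ad $$ (l, j))) t)" for t
  define D where "D = max (degree (char_poly M)) (Max ((\<lambda>l. degree (Ad $$ (l, j))) ` {0..<k}))"
  have "(\<Sum>t\<le>degree (char_poly M). coeff (char_poly M) t * (M ^\<^sub>m t) $$ (i, j))
      = (\<Sum>t<Suc (Suc D). coeff (char_poly M) t * (M ^\<^sub>m t) $$ (i, j))"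
    by (intro sum.mono_neutral_left) (auto simp: D_def coeff_eq_0)
  also have "\<dots> = (\<Sum>t<Suc (Suc D). g t - g (Suc t))"
    using char_poly_coeff_pow_entry_telescope[OF M ij] by (simp add: g_def Ad_def)
  also have "\<dots> = g 0 - g (Suc (Suc D))"
    by (rule sum_lessThan_telescope')
  also have "g (Suc (Suc D)) = 0"
    unfolding g_def
  proof (intro sum.neutral ballI)
    fix l assume "l \<in> {0..<k}"
    then have "degree (Ad $$ (l, j)) \<le> D"
      unfolding D_def by (intro max.coboundedI2 Max_ge) auto
    then show "(M ^\<^sub>m Suc (Suc D)) $$ (i, l) * coeff (pCons 0 (Ad $$ (l, j))) (Suc (Suc D)) = 0"
      by (simp add: coeff_eq_0)
  qed
  finally show ?thesis
    by (simp add: g_def)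
qed

lemma poly_eval_C2mat_char_poly_Phi2:
  assumes A: "A \<in> carrier_mat m m"
  shows "poly_eval_C2mat (char_poly (Phi2 A)) A = 0\<^sub>m m m"
proof (rule eq_matI)
  fix i j assume "i < dim_row (0\<^sub>m m m :: C2 mat)" "j < dim_col (0\<^sub>m m m :: C2 mat)"
  then have ij: "i < m" "j < m" by auto
  define \<chi> where "\<chi> = char_poly (Phi2 A)"
  have "C2_rep a b (\<Sum>t\<le>degree \<chi>. cs (coeff \<chi> t) * (A ^\<^sub>m t) $$ (i, j))
      = (\<Sum>t\<le>degree \<chi>. coeff \<chi> t * (Phi2 A ^\<^sub>m t) $$ (block_idx m a i, block_idx m b j))" for a b
    using A ij by (simp add: C2_rep_sum C2_rep_cs_mult Phi2_pow[symmetric] index_Phi2)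
  also have "\<dots> a b = 0" for a b
    unfolding \<chi>_def using Phi2_carrier[OF A] ij
    by (intro cayley_hamilton_entry) (auto simp: block_idx_less)
  finally have "\<forall>a b. C2_rep a b (\<Sum>t\<le>degree \<chi>. cs (coeff \<chi> t) * (A ^\<^sub>m t) $$ (i, j)) = C2_rep a b 0"
    by simp
  then have "(\<Sum>t\<le>degree \<chi>. cs (coeff \<chi> t) * (A ^\<^sub>m t) $$ (i, j)) = 0"
    by (simp only: C2_rep_inject)
  then show "poly_eval_C2mat (char_poly (Phi2 A)) A $$ (i, j) = 0\<^sub>m m m $$ (i, j)"
    using A ij by (simp add: poly_eval_C2mat_def \<chi>_def)
qed (use A in \<open>simp_all add: poly_eval_C2mat_def\<close>)

theorem corollary11:
  fixes m n p :: nat and A B :: "C2 mat" and C :: "C2 mat" and lam :: complex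
  assumes A: "A \<in> carrier_mat m n" and B: "B \<in> carrier_mat m n"
    and C: "C \<in> carrier_mat n p"
  shows
    "(A = B \<longleftrightarrow> Phi2 A = Phi2 B)
   \<and> Phi2 (A + B) = Phi2 A + Phi2 B
   \<and> Phi2 (A * C) = Phi2 A * Phi2 C
   \<and> Phi2 (cs lam \<cdot>\<^sub>m A) = lam \<cdot>\<^sub>m Phi2 A
   \<and> Phi2 (1\<^sub>m m) = 1\<^sub>m (2 * m)
   \<and> Phi2 (sharp A) = ctrans (Phi2 A)
   \<and> A = cs (1/4) \<cdot>\<^sub>m
          (row_block ((1 - cs \<i> * e1) \<cdot>\<^sub>m 1\<^sub>m m) ((e2 + cs \<i> * e12) \<cdot>\<^sub>m 1\<^sub>m m)
           * map_mat cs (Phi2 A)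
           * transpose_mat
               (row_block ((1 - cs \<i> * e1) \<cdot>\<^sub>m 1\<^sub>m n) ((- e2 + cs \<i> * e12) \<cdot>\<^sub>m 1\<^sub>m n)))
   \<and> (m = n \<longrightarrow>
        (invertible_mat A \<longleftrightarrow> invertible_mat (Phi2 A))
      \<and> (\<forall>Ainv \<in> carrier_mat m m. A * Ainv = 1\<^sub>m m \<and> Ainv * A = 1\<^sub>m m \<longrightarrow>
            Phi2 Ainv * Phi2 A = 1\<^sub>m (2 * m) \<and> Phi2 A * Phi2 Ainv = 1\<^sub>m (2 * m))
      \<and> poly_eval_C2mat (char_poly (Phi2 A)) A = 0\<^sub>m m m
      \<and> ((\<exists>X \<in> carrier_mat m m. invertible_mat X \<and> A * X = X * B)
           \<longleftrightarrow> similar_mat (Phi2 A) (Phi2 B)))"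
proof (cases "m = n")
  case True
  with A B have A': "A \<in> carrier_mat m m" and B': "B \<in> carrier_mat m m" by simp_all
  show ?thesis
    using Phi2_eq_iff[OF A B] Phi2_add[OF A B] Phi2_mult[OF A C] Phi2_smult[OF A] Phi2_one
      Phi2_sharp[OF A] Phi2_reconstruct[OF A] invertible_mat_Phi2_iff[OF A']
      Phi2_mult_eq_one_iff[OF A'] Phi2_mult_eq_one_iff[OF _ A'] poly_eval_C2mat_char_poly_Phi2[OF A']
      similar_mat_Phi2_iff[OF A' B'] similar_mat_iff_intertwining[OF A' B']
    by blast
next
  case False
  then show ?thesis
    using Phi2_eq_iff[OF A B] Phi2_add[OF A B] Phi2_mult[OF A C] Phi2_smult[OF A] Phi2_one
      Phi2_sharp[OF A] Phi2_reconstruct[OF A]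
    by blast
qed

end
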